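(* Fix an integer $m\ge1$ and let $\omega=\omega(n)\to\infty$ with $\omega\le\log n$. There is a sequence $\varepsilon_n\to0$ such that with probability $1-o(1)$, $$B_i\le \varepsilon_n\,\frac{W_i}{\log n}\qquad\text{for all integers } i \text{ with } \log^3n\le i\le n.$$
   Context: $\xi_1,\dots,\xi_{mn+1}$ are independent mean-one exponential random variables, $\Upsilon_N=\xi_1+\dots+\xi_N$, $W_i=(\Upsilon_{mi}/\Upsilon_{mn+1})^{1/2}$, and $\eta_v=\xi_{(v-1)m+1}+\dots+\xi_{vm}$ for $v\in[n]$. Let $\lambda_0=\log^{-4/m}n$. For $v\in[n]$ put $X_v=\dfrac{\lambda_0\,\mathbf 1_{\{\eta_v\le\lambda_0\}}}{2m(vn)^{1/2}}$ and $B_i=\sum_{v=\lceil\omega\rceil}^{i}X_v$. *)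

theory Defs
  imports "HOL-Probability.Probability"
begin

definition Ups :: "(nat \<Rightarrow> 'a \<Rightarrow> real) \<Rightarrow> nat \<Rightarrow> 'a \<Rightarrow> real" where
  "Ups \<xi> N x = (\<Sum>j = 1..N. \<xi> j x)"

definition Wv :: "nat \<Rightarrow> nat \<Rightarrow> (nat \<Rightarrow> 'a \<Rightarrow> real) \<Rightarrow> nat \<Rightarrow> 'a \<Rightarrow> real" where
  "Wv m n \<xi> i x = sqrt (Ups \<xi> (m * i) x / Ups \<xi> (m * n + 1) x)"

definition eta :: "nat \<Rightarrow> (nat \<Rightarrow> 'a \<Rightarrow> real) \<Rightarrow> nat \<Rightarrow> 'a \<Rightarrow> real" where
  "eta m \<xi> v x = (\<Sum>j = (v - 1) * m + 1..v * m. \<xi> j x)"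

definition lam0 :: "nat \<Rightarrow> nat \<Rightarrow> real" where
  "lam0 m n = ln (real n) powr (- 4 / real m)"

definition Xv :: "nat \<Rightarrow> nat \<Rightarrow> (nat \<Rightarrow> 'a \<Rightarrow> real) \<Rightarrow> nat \<Rightarrow> 'a \<Rightarrow> real" where
  "Xv m n \<xi> v x = lam0 m n * (if eta m \<xi> v x \<le> lam0 m n then 1 else 0)
      / (2 * real m * sqrt (real v * real n))"

definition Bv :: "nat \<Rightarrow> nat \<Rightarrow> real \<Rightarrow> (nat \<Rightarrow> 'a \<Rightarrow> real) \<Rightarrow> nat \<Rightarrow> 'a \<Rightarrow> real" where
  "Bv m n w \<xi> i x = (\<Sum>v = nat \<lceil>w\<rceil>..i. Xv m n \<xi> v x)"

end

theory Submission
  imports Defs "HOL-Analysis.Harmonic_Numbers" "HOL-Real_Asymp.Real_Asymp"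
begin

(*
  Write l = ln n and \<lambda>\<^sub>0 = l^(-4/m).  The bound B_i \<le> \<epsilon>\<^sub>n W_i / l holds with \<epsilon>\<^sub>n = 2/l on
  the intersection of three "good" events:
    (1) the total sum \<Upsilon>_{mn+1} is less than twice its mean mn+1;
    (2) for every dyadic scale 2^k with l^3/2 \<le> 2^k \<le> n, the partial sum \<Upsilon>_{m 2^k} exceeds
        half its mean;
    (3) Z = \<Sum>_{v=1..n} [\<eta>_v \<le> \<lambda>\<^sub>0] / v is less than 1/l^2.
  Indeed (1) and (2), by monotonicity of \<Upsilon>, give W_i \<ge> (i/n)^(1/2)/4 for l^3 \<le> i \<le> n,
  while trivially B_i \<le> (i/n)^(1/2)/2 \<cdot> Z.  Since \<Upsilon>_N is Erlang distributed with mean and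
  variance N, Chebyshev's inequality bounds the failure probability of (1) by 1/n and, summed
  over the geometric range of scales, of (2) by 16/l^3; as \<eta>_v is Erlang of shape m,
  P(\<eta>_v \<le> \<lambda>) \<le> \<lambda>^m = l^(-4), and Markov's inequality bounds the failure of (3) by
  l^(-2) H_n = O(1/l).
*)

text \<open>The Erlang distribution function of shape \<open>m\<close> satisfies \<open>F(\<lambda>) \<le> \<lambda>^m\<close>; this follows
  from the Lagrange remainder of the Taylor expansion of \<open>exp\<close>.\<close>
lemma erlang_CDF_le_power:
  assumes "lam \<ge> 0" "m \<ge> 1"
  shows "erlang_CDF (m - 1) 1 lam \<le> lam ^ m"
proof -
  obtain t where t: "\<bar>t\<bar> \<le> \<bar>lam\<bar>"
    "exp lam = (\<Sum>n<m. lam ^ n / fact n) + (exp t / fact m) * lam ^ m"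
    using Maclaurin_exp_le[of lam m] by blast
  have "{..m - 1} = {..<m}" using assms by auto
  then have "erlang_CDF (m - 1) 1 lam = 1 - exp (-lam) * (\<Sum>n<m. lam ^ n / fact n)"
    using assms by (simp add: erlang_CDF_def sum_distrib_left field_simps)
  also have "(\<Sum>n<m. lam ^ n / fact n) = exp lam - exp t / fact m * lam ^ m"
    using t(2) by linarith
  also have "1 - exp (-lam) * (exp lam - exp t / fact m * lam ^ m) = exp (t - lam) / fact m * lam ^ m"
    by (simp add: algebra_simps exp_diff exp_minus divide_inverse)
  also have "\<dots> \<le> 1 * lam ^ m"
  proof (rule mult_right_mono)
    have "exp (t - lam) \<le> 1" using t(1) assms(1) by simp
    then show "exp (t - lam) / fact m \<le> 1"
      by (meson divide_le_eq_1 fact_ge_1 less_le_trans order.trans zero_less_one)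
  qed (use assms in simp)
  finally show ?thesis by simp
qed

text \<open>A sum of \<open>1/2^k\<close> over distinct exponents with \<open>2^k \<ge> a\<close> is at most \<open>2/a\<close>
  (comparison with a geometric series).\<close>
lemma sum_inverse_powers_of_two_le:
  fixes K :: "nat set" and a :: real
  assumes fin: "finite K" and a: "a > 0" and large: "\<And>k. k \<in> K \<Longrightarrow> a \<le> 2 ^ k"
  shows "(\<Sum>k\<in>K. 1 / 2 ^ k) \<le> 2 / a"
proof (cases "K = {}")
  case True then show ?thesis using a by simp
next
  case False
  define k0 where "k0 = Min K"
  define N where "N = Max K - k0 + 1"
  have sub: "K \<subseteq> {k0..<k0 + N}"
  proof
    fix x assume "x \<in> K"
    then have "k0 \<le> x" "x \<le> Max K" using fin by (auto simp: k0_def)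
    then show "x \<in> {k0..<k0 + N}" by (auto simp: N_def)
  qed
  have geo: "(\<Sum>k\<in>{k0..<k0 + N'}. (1/2::real) ^ k) = 2 * (1/2) ^ k0 - 2 * (1/2) ^ (k0 + N')" for N'
    by (induction N') (auto simp: field_simps power_add)
  have "(\<Sum>k\<in>K. 1 / 2 ^ k) = (\<Sum>k\<in>K. (1/2::real) ^ k)" by (simp add: power_one_over)
  also have "\<dots> \<le> (\<Sum>k\<in>{k0..<k0 + N}. (1/2::real) ^ k)"
    by (rule sum_mono2) (use sub in auto)
  also have "\<dots> \<le> 2 * (1/2) ^ k0" unfolding geo by simp
  also have "(1/2::real) ^ k0 \<le> 1 / a"
  proof -
    have "a \<le> 2 ^ k0" using fin False by (intro large) (simp add: k0_def)
    then show ?thesis using a by (simp add: power_one_over field_simps)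
  qed
  finally show ?thesis by simp
qed

lemma lam0_le_1:
  assumes "1 \<le> ln (real n)"
  shows "lam0 m n \<le> 1"
proof -
  have "ln (real n) powr (- 4 / real m) \<le> ln (real n) powr 0"
    by (rule powr_mono) (use assms in auto)
  then show ?thesis using assms by (simp add: lam0_def)
qed

lemma lam0_power:
  assumes "1 \<le> ln (real n)" "m \<ge> 1"
  shows "lam0 m n ^ m = 1 / ln (real n) ^ 4"
proof -
  have "lam0 m n ^ m = ln (real n) powr (real m * (- 4 / real m))"
    unfolding lam0_def using assms by (subst powr_power) auto
  also have "\<dots> = 1 / ln (real n) ^ 4" using assms by (simp add: powr_minus field_simps)
  finally show ?thesis .
qed

section \<open>Deterministic estimates for a fixed outcome\<close>

lemma Ups_mono:
  assumes "\<And>k. 0 \<le> \<xi> k x" "a \<le> b"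
  shows "Ups \<xi> a x \<le> Ups \<xi> b x"
  unfolding Ups_def by (rule sum_mono2) (use assms in auto)

text \<open>The weighted count of blocks \<open>\<eta>\<^sub>v\<close> below the threshold \<open>\<lambda>\<close>, i.e.
  \<open>Z = \<Sum>\<^sub>v\<^sub>=\<^sub>1\<^sub>.\<^sub>.\<^sub>n [\<eta>\<^sub>v \<le> \<lambda>] / v\<close>; it dominates every \<open>B\<^sub>i\<close>.\<close>
definition small_eta_sum :: "nat \<Rightarrow> nat \<Rightarrow> (nat \<Rightarrow> 'a \<Rightarrow> real) \<Rightarrow> real \<Rightarrow> 'a \<Rightarrow> real" where
  "small_eta_sum m n \<xi> lam x = (\<Sum>v = 1..n. (if eta m \<xi> v x \<le> lam then 1 else 0) / real v)"

text \<open>Each summand of \<open>B\<^sub>i\<close> is at most \<open>\<surd>(i/n)/2\<close> times the corresponding summand of \<open>Z\<close>,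
  because \<open>\<lambda>\<^sub>0 \<le> 1 \<le> m\<close> and \<open>\<surd>v \<le> \<surd>i\<close>.\<close>
lemma Xv_le:
  assumes m: "m \<ge> 1" and v: "1 \<le> v" "v \<le> i" and i: "i \<le> n" and lam: "lam0 m n \<le> 1"
  shows "Xv m n \<xi> v x \<le> sqrt (real i / real n) / 2 * ((if eta m \<xi> v x \<le> lam0 m n then 1 else 0) / real v)"
proof (cases "eta m \<xi> v x \<le> lam0 m n")
  case True
  have pos: "sqrt (real v) > 0" "sqrt (real n) > 0" using v i by auto
  have "lam0 m n / (2 * real m * sqrt (real v * real n)) = (lam0 m n / m) * (1 / (2 * sqrt v * sqrt n))"
    by (simp add: real_sqrt_mult)
  also have "\<dots> \<le> 1 * (1 / (2 * sqrt v * sqrt n))"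
    by (rule mult_right_mono) (use m lam pos in \<open>auto simp: lam0_def\<close>)
  also have "\<dots> \<le> sqrt i / (2 * sqrt n * v)"
  proof -
    have "sqrt v * sqrt v \<le> sqrt i * sqrt v" using v pos by (intro mult_right_mono) auto
    then have "v \<le> sqrt i * sqrt v" by simp
    then show ?thesis using pos v by (simp add: field_simps)
  qed
  finally show ?thesis using True by (simp add: Xv_def real_sqrt_divide)
qed (simp add: Xv_def)

lemma Bv_le_small_eta_sum:
  assumes m: "m \<ge> 1" and i: "i \<le> n" and lam: "lam0 m n \<le> 1"
  shows "Bv m n w \<xi> i x \<le> sqrt (real i / real n) / 2 * small_eta_sum m n \<xi> (lam0 m n) x"
proof -
  define c where "c = sqrt (real i / real n) / 2"
  define z where "z v = (if eta m \<xi> v x \<le> lam0 m n then 1 else 0) / real v" for v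
  have "Bv m n w \<xi> i x \<le> (\<Sum>v = nat \<lceil>w\<rceil>..i. c * z v)"
    unfolding Bv_def
  proof (rule sum_mono)
    fix v assume v: "v \<in> {nat \<lceil>w\<rceil>..i}"
    show "Xv m n \<xi> v x \<le> c * z v"
    proof (cases "v = 0")
      case False
      then show ?thesis using Xv_le[OF m _ _ i lam, where v = v and \<xi> = \<xi> and x = x] v
        by (simp add: c_def z_def)
    qed (simp add: Xv_def z_def)
  qed
  also have "\<dots> \<le> (\<Sum>v\<le>n. c * z v)"
    by (rule sum_mono2) (use i in \<open>auto simp: c_def z_def\<close>)
  also have "\<dots> = (\<Sum>v = 1..n. c * z v)"
    by (rule sum.mono_neutral_right) (auto simp: z_def)
  finally show ?thesis by (simp add: small_eta_sum_def sum_distrib_left c_def z_def)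
qed

lemma Wv_lower_bound:
  assumes nn: "\<And>k. 0 \<le> \<xi> k x" and m: "m \<ge> 1"
    and total: "Ups \<xi> (m * n + 1) x < 2 * real (m * n + 1)"
    and block: "real (m * 2 ^ k) / 2 < Ups \<xi> (m * 2 ^ k) x"
    and k: "2 ^ k \<le> i" "real i < 2 * 2 ^ k" and i: "i \<le> n"
  shows "sqrt (real i / real n) / 4 \<le> Wv m n \<xi> i x"
proof -
  have "(1::nat) \<le> 2 ^ k" by simp
  then have n1: "1 \<le> n" using k(1) i by linarith
  then have "1 \<le> m * n" using mult_le_mono[OF m n1] by simp
  then have mn: "1 \<le> real m * real n" by (metis of_nat_1 of_nat_le_iff of_nat_mult)
  have i1: "1 \<le> i" using k(1) \<open>1 \<le> 2 ^ k\<close> by linarith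
  have lower: "real m * real i / 4 < Ups \<xi> (m * i) x"
  proof -
    have "real m * real i / 4 \<le> real (m * 2 ^ k) / 2" using k(2) m by simp
    also have "\<dots> < Ups \<xi> (m * 2 ^ k) x" by (rule block)
    also have "\<dots> \<le> Ups \<xi> (m * i) x" using k(1) by (intro Ups_mono nn) simp
    finally show ?thesis .
  qed
  have upper: "Ups \<xi> (m * i) x \<le> Ups \<xi> (m * n + 1) x"
    using mult_le_mono2[OF i, of m] by (intro Ups_mono nn) linarith
  have pos: "real m * real i / 4 > 0" using m i1 by simp
  have "(real i / real n) / 16 = (real m * real i / 4) / (4 * (real m * real n))"
    using m mn by (simp add: field_simps)
  also have "\<dots> \<le> (real m * real i / 4) / (2 * real (m * n + 1))"
    by (rule frac_le) (use pos mn in auto)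
  also have "\<dots> \<le> Ups \<xi> (m * i) x / Ups \<xi> (m * n + 1) x"
    by (rule frac_le) (use lower upper total pos in linarith)+
  finally have "sqrt ((real i / real n) / 16) \<le> Wv m n \<xi> i x"
    unfolding Wv_def by simp
  then show ?thesis by (simp add: real_sqrt_divide real_sqrt_mult)
qed

lemma good_outcome_bound:
  assumes nn: "\<And>k. 0 \<le> \<xi> k x" and m: "m \<ge> 1" and l: "1 \<le> ln (real n)"
    and total: "Ups \<xi> (m * n + 1) x < 2 * real (m * n + 1)"
    and blocks: "\<And>k. ln (real n) ^ 3 / 2 \<le> 2 ^ k \<Longrightarrow> 2 ^ k \<le> n \<Longrightarrow>
                   real (m * 2 ^ k) / 2 < Ups \<xi> (m * 2 ^ k) x"
    and sparse: "small_eta_sum m n \<xi> (lam0 m n) x < 1 / ln (real n) ^ 2"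
    and i: "ln (real n) ^ 3 \<le> real i" "i \<le> n"
  shows "Bv m n w \<xi> i x \<le> 2 / ln (real n) * Wv m n \<xi> i x / ln (real n)"
proof -
  define l where "l = ln (real n)"
  have l1: "1 \<le> l" using l by (simp add: l_def)
  have "1 \<le> l ^ 3" using l1 by simp
  then have i1: "i \<ge> 1" using i(1) by (simp add: l_def)
  obtain k where k1: "2 ^ k \<le> i" and k2: "i < 2 ^ (k + 1)"
    using ex_power_ivl1[of 2 i] i1 by auto
  have k2r: "real i < 2 * 2 ^ k"
    using k2 by (metis of_nat_less_iff of_nat_numeral of_nat_power power_Suc Suc_eq_plus1)
  have W: "sqrt (real i / real n) / 4 \<le> Wv m n \<xi> i x"
  proof (rule Wv_lower_bound[OF nn m total _ k1 k2r i(2)])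
    show "real (m * 2 ^ k) / 2 < Ups \<xi> (m * 2 ^ k) x"
      by (rule blocks) (use i k1 k2r in auto)
  qed
  have Z: "small_eta_sum m n \<xi> (lam0 m n) x \<ge> 0"
    unfolding small_eta_sum_def by (intro sum_nonneg) auto
  have "Bv m n w \<xi> i x \<le> sqrt (real i / real n) / 2 * small_eta_sum m n \<xi> (lam0 m n) x"
    by (rule Bv_le_small_eta_sum[OF m i(2) lam0_le_1[OF l]])
  also have "\<dots> \<le> sqrt (real i / real n) / 2 * (1 / l ^ 2)"
    using sparse by (intro mult_left_mono) (auto simp: l_def)
  also have "\<dots> = 2 / l * (sqrt (real i / real n) / 4) / l"
    using l1 by (simp add: field_simps power2_eq_square)
  also have "\<dots> \<le> 2 / l * Wv m n \<xi> i x / l"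
    using W l1 by (intro divide_right_mono mult_left_mono) auto
  finally show ?thesis by (simp add: l_def)
qed

lemma harm_le_1_plus_ln:
  assumes "n \<ge> 1"
  shows "harm n \<le> 1 + ln (real n)"
  using euler_mascheroni_sequence_decreasing[of 1 n] assms by (simp add: harm_def)

section \<open>Probabilistic estimates\<close>

context prob_space
begin

lemma Ups_measurable[measurable]:
  assumes [measurable]: "\<And>k. \<xi> k \<in> borel_measurable M"
  shows "Ups \<xi> N \<in> borel_measurable M"
  unfolding Ups_def[abs_def] by measurable

lemma eta_measurable[measurable]:
  assumes [measurable]: "\<And>k. \<xi> k \<in> borel_measurable M"
  shows "eta m \<xi> v \<in> borel_measurable M"
  unfolding eta_def[abs_def] by measurable

lemma small_eta_sum_measurable[measurable]:
  assumes [measurable]: "\<And>k. \<xi> k \<in> borel_measurable M"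
  shows "small_eta_sum m n \<xi> lam \<in> borel_measurable M"
  unfolding small_eta_sum_def[abs_def] by measurable

lemma Bv_measurable[measurable]:
  assumes [measurable]: "\<And>k. \<xi> k \<in> borel_measurable M"
  shows "Bv m n w \<xi> i \<in> borel_measurable M"
  unfolding Bv_def[abs_def] Xv_def[abs_def] by measurable

lemma Wv_measurable[measurable]:
  assumes [measurable]: "\<And>k. \<xi> k \<in> borel_measurable M"
  shows "Wv m n \<xi> i \<in> borel_measurable M"
  unfolding Wv_def[abs_def] by measurable

lemma exponential_sum_erlang:
  assumes ind: "indep_vars (\<lambda>_. borel) \<xi> UNIV"
    and ex: "\<And>k. distributed M lborel (\<xi> k) (exponential_density 1)"
    and I: "finite I" "I \<noteq> {}"
  shows "distributed M lborel (\<lambda>x. \<Sum>i\<in>I. \<xi> i x) (erlang_density (card I - 1) 1)"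
  by (rule exponential_distributed_sum) (use I ex in \<open>auto intro: indep_vars_subset[OF ind]\<close>)

text \<open>Chebyshev's inequality for an Erlang variable, whose mean and variance both equal
  its shape \<open>k + 1\<close>.\<close>
lemma erlang_Chebyshev:
  assumes D: "distributed M lborel X (erlang_density k 1)" and a: "a > 0"
  shows "prob {x\<in>space M. a \<le> \<bar>X x - (real k + 1)\<bar>} \<le> (real k + 1) / a\<^sup>2"
proof -
  have X: "random_variable borel X" using distributed_measurable[OF D] by simp
  have X2: "integrable M (\<lambda>x. X x ^ 2)" using erlang_ith_moment_integrable[OF _ D, of 2] by simp
  have "expectation X = k + 1" using erlang_ith_moment[OF _ D, of 1] by simp
  moreover have "variance X = k + 1" using erlang_distributed_variance[OF _ D] by simp
  ultimately show ?thesis using Chebyshev_inequality[OF X X2 a] by (simp add: add.commute)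
qed

lemma Ups_deviation_prob:
  assumes ind: "indep_vars (\<lambda>_. borel) \<xi> UNIV"
    and ex: "\<And>k. distributed M lborel (\<xi> k) (exponential_density 1)"
    and N: "N \<ge> 1" and c: "c > 0"
  shows "prob {x\<in>space M. c \<le> \<bar>Ups \<xi> N x - real N\<bar>} \<le> real N / c\<^sup>2"
proof -
  have "distributed M lborel (Ups \<xi> N) (erlang_density (N - 1) 1)"
    using exponential_sum_erlang[OF ind ex, of "{1..N}"] N by (simp add: Ups_def[abs_def])
  moreover have "real (N - 1) + 1 = real N" using N by simp
  ultimately show ?thesis using erlang_Chebyshev[OF _ c] by metis
qed

lemma eta_small_prob:
  assumes ind: "indep_vars (\<lambda>_. borel) \<xi> UNIV"
    and ex: "\<And>k. distributed M lborel (\<xi> k) (exponential_density 1)"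
    and m: "m \<ge> 1" and v: "v \<ge> 1" and lam: "lam \<ge> 0"
  shows "prob {x\<in>space M. eta m \<xi> v x \<le> lam} \<le> lam ^ m"
proof -
  have "v * m = (v - 1) * m + m" using v by (cases v) auto
  then have card: "card {(v - 1) * m + 1..v * m} = m" by simp
  have "distributed M lborel (\<lambda>x. \<Sum>j\<in>{(v - 1) * m + 1..v * m}. \<xi> j x)
      (erlang_density (card {(v - 1) * m + 1..v * m} - 1) 1)"
    by (rule exponential_sum_erlang[OF ind ex]) (use card m in auto)
  then have "distributed M lborel (eta m \<xi> v) (erlang_density (m - 1) 1)"
    unfolding card by (simp add: eta_def[abs_def])
  then show ?thesis
    using erlang_distributed_le[OF _ _ lam] erlang_CDF_le_power[OF lam m] by simp
qed

text \<open>Markov's inequality for the weighted count \<open>Z\<close>, whose mean is at most \<open>\<lambda>^m H\<^sub>n\<close>.\<close>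
lemma small_eta_sum_prob:
  assumes ind: "indep_vars (\<lambda>_. borel) \<xi> UNIV"
    and ex: "\<And>k. distributed M lborel (\<xi> k) (exponential_density 1)"
    and m: "m \<ge> 1" and lam: "lam \<ge> 0" and \<delta>: "\<delta> > 0"
  shows "prob {x\<in>space M. \<delta> \<le> small_eta_sum m n \<xi> lam x} \<le> lam ^ m * harm n / \<delta>"
proof -
  have [measurable]: "\<And>k. \<xi> k \<in> borel_measurable M"
    using distributed_measurable[OF ex] by simp
  define A where "A v = {x\<in>space M. eta m \<xi> v x \<le> lam}" for v
  have [measurable]: "A v \<in> sets M" for v unfolding A_def by measurable
  have Z: "small_eta_sum m n \<xi> lam x = (\<Sum>v = 1..n. indicator (A v) x / real v)"
    if "x \<in> space M" for x
    using that by (simp add: small_eta_sum_def A_def indicator_def of_bool_def)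
  have int: "integrable M (\<lambda>x. indicator (A v) x / real v)" for v
    by (intro integrable_divide_zero integrable_real_indicator) (auto simp: emeasure_eq_measure)
  have intZ: "integrable M (small_eta_sum m n \<xi> lam)"
    by (rule Bochner_Integration.integrable_cong[OF refl Z, THEN iffD2]) (auto intro: int)
  have "(\<integral>x. small_eta_sum m n \<xi> lam x \<partial>M) = (\<integral>x. (\<Sum>v = 1..n. indicator (A v) x / real v) \<partial>M)"
    by (rule Bochner_Integration.integral_cong[OF refl Z])
  also have "\<dots> = (\<Sum>v = 1..n. prob (A v) / real v)"
    by (simp add: Bochner_Integration.integral_sum[OF int])
  also have "\<dots> \<le> (\<Sum>v = 1..n. lam ^ m / real v)"
    unfolding A_def by (intro sum_mono divide_right_mono eta_small_prob[OF ind ex m _ lam]) auto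
  also have "\<dots> = lam ^ m * harm n"
    by (simp add: harm_def sum_distrib_left divide_inverse)
  finally have mean: "(\<integral>x. small_eta_sum m n \<xi> lam x \<partial>M) \<le> lam ^ m * harm n" .
  have "AE x in M. 0 \<le> small_eta_sum m n \<xi> lam x"
    by (auto simp: small_eta_sum_def intro!: sum_nonneg)
  then have "prob {x\<in>space M. \<delta> \<le> small_eta_sum m n \<xi> lam x}
      \<le> (\<integral>x. small_eta_sum m n \<xi> lam x \<partial>M) / \<delta>"
    by (intro integral_Markov_inequality_measure[OF intZ sets.top _ \<delta>])
  also have "\<dots> \<le> lam ^ m * harm n / \<delta>"
    using mean \<delta> by (intro divide_right_mono) simp_all
  finally show ?thesis .
qed

lemma total_sum_deviation_prob:
  assumes ind: "indep_vars (\<lambda>_. borel) \<xi> UNIV"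
    and ex: "\<And>k. distributed M lborel (\<xi> k) (exponential_density 1)"
    and m: "m \<ge> 1"
  shows "prob {x\<in>space M. real (m * n + 1) \<le> \<bar>Ups \<xi> (m * n + 1) x - real (m * n + 1)\<bar>}
    \<le> 1 / (real n + 1)"
proof -
  have pos: "0 < real (m * n + 1)" by (simp only: of_nat_0_less_iff)
  have "prob {x\<in>space M. real (m * n + 1) \<le> \<bar>Ups \<xi> (m * n + 1) x - real (m * n + 1)\<bar>}
      \<le> real (m * n + 1) / (real (m * n + 1))\<^sup>2"
    by (rule Ups_deviation_prob[OF ind ex _ pos]) simp
  also have "\<dots> = 1 / real (m * n + 1)" by (simp add: power2_eq_square)
  also have "\<dots> \<le> 1 / (real n + 1)"
  proof (rule divide_left_mono)
    have "n \<le> m * n" using m by simp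
    then show "real n + 1 \<le> real (m * n + 1)"
      by (simp only: of_nat_add of_nat_le_iff of_nat_1 add_le_cancel_right)
    show "0 < real (m * n + 1) * (real n + 1)" using pos by simp
  qed simp
  finally show ?thesis .
qed

text \<open>Failure of the third good event: since \<open>\<lambda>\<^sub>0^m = (ln n)^(-4)\<close> and \<open>H\<^sub>n \<le> 1 + ln n\<close>,
  the weighted count \<open>Z\<close> reaches \<open>(ln n)^(-2)\<close> with probability \<open>O(1 / ln n)\<close>.\<close>
lemma small_eta_sum_failure_prob:
  assumes ind: "indep_vars (\<lambda>_. borel) \<xi> UNIV"
    and ex: "\<And>k. distributed M lborel (\<xi> k) (exponential_density 1)"
    and m: "m \<ge> 1" and l: "1 \<le> ln (real n)"
  shows "prob {x\<in>space M. 1 / ln (real n) ^ 2 \<le> small_eta_sum m n \<xi> (lam0 m n) x}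
    \<le> (1 + ln (real n)) / ln (real n) ^ 2"
proof -
  have n1: "n \<ge> 1" using l by (cases n) auto
  have "prob {x\<in>space M. 1 / ln (real n) ^ 2 \<le> small_eta_sum m n \<xi> (lam0 m n) x}
      \<le> lam0 m n ^ m * harm n / (1 / ln (real n) ^ 2)"
    using l by (intro small_eta_sum_prob[OF ind ex m]) (auto simp: lam0_def)
  also have "\<dots> = harm n / ln (real n) ^ 2"
    using lam0_power[OF l m] l by (simp add: field_simps power_add[symmetric])
  also have "\<dots> \<le> (1 + ln (real n)) / ln (real n) ^ 2"
    using harm_le_1_plus_ln[OF n1] by (intro divide_right_mono) auto
  finally show ?thesis .
qed

lemma dyadic_deviation_prob:
  assumes ind: "indep_vars (\<lambda>_. borel) \<xi> UNIV"
    and ex: "\<And>k. distributed M lborel (\<xi> k) (exponential_density 1)"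
    and m: "m \<ge> 1" and a: "a > 0" and K: "finite K" "\<And>k. k \<in> K \<Longrightarrow> a \<le> 2 ^ k"
  shows "prob (\<Union>k\<in>K. {x\<in>space M. real (m * 2 ^ k) / 2 \<le> \<bar>Ups \<xi> (m * 2 ^ k) x - real (m * 2 ^ k)\<bar>})
    \<le> 8 / a"
proof -
  have [measurable]: "\<And>k. \<xi> k \<in> borel_measurable M"
    using distributed_measurable[OF ex] by simp
  define E where "E k = {x\<in>space M. real (m * 2 ^ k) / 2 \<le> \<bar>Ups \<xi> (m * 2 ^ k) x - real (m * 2 ^ k)\<bar>}" for k
  have E: "prob (E k) \<le> 4 * (1 / 2 ^ k)" for k
  proof -
    define N where "N = m * 2 ^ k"
    have N1: "N \<ge> 1" using m by (simp add: N_def)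
    have "prob (E k) \<le> real N / (real N / 2)\<^sup>2"
      unfolding E_def N_def[symmetric] by (rule Ups_deviation_prob[OF ind ex N1]) (use N1 in simp)
    also have "\<dots> = 4 / real N" using N1 by (simp add: power2_eq_square field_simps)
    also have "\<dots> \<le> 4 / 2 ^ k"
    proof (rule divide_left_mono)
      have "2 ^ k \<le> N" using m by (simp add: N_def)
      then show "(2::real) ^ k \<le> real N" by (metis of_nat_le_iff of_nat_numeral of_nat_power)
    qed (use N1 in simp_all)
    finally show ?thesis by simp
  qed
  have "prob (\<Union>k\<in>K. E k) \<le> (\<Sum>k\<in>K. prob (E k))"
    by (rule measure_UNION_le[OF K(1)]) (simp add: E_def)
  also have "\<dots> \<le> 4 * (\<Sum>k\<in>K. 1 / 2 ^ k)"
    unfolding sum_distrib_left by (rule sum_mono) (rule E)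
  also have "\<dots> \<le> 4 * (2 / a)"
    by (intro mult_left_mono sum_inverse_powers_of_two_le[OF K(1) a K(2)]) simp_all
  finally show ?thesis by (simp add: E_def)
qed

lemma exponential_nonneg_AE:
  fixes \<xi> :: "nat \<Rightarrow> 'a \<Rightarrow> real"
  assumes ex: "\<And>k. distributed M lborel (\<xi> k) (exponential_density 1)"
  shows "AE x in M. \<forall>k. 0 \<le> \<xi> k x"
proof (rule AE_all_countable[THEN iffD2], intro allI)
  fix k show "AE x in M. 0 \<le> \<xi> k x"
    by (subst distributed_AE2[OF ex]) (auto simp: erlang_density_def)
qed

lemma bound_prob_for_fixed_n:
  assumes ind: "indep_vars (\<lambda>_. borel) \<xi> UNIV"
    and ex: "\<And>k. distributed M lborel (\<xi> k) (exponential_density 1)"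
    and m: "m \<ge> 1" and l: "1 \<le> ln (real n)"
  shows "1 - (1 / (real n + 1) + 16 / ln (real n) ^ 3 + (1 + ln (real n)) / ln (real n) ^ 2)
     \<le> prob {x \<in> space M. \<forall>i::nat. ln (real n) ^ 3 \<le> real i \<and> i \<le> n \<longrightarrow>
        Bv m n w \<xi> i x \<le> 2 / ln (real n) * Wv m n \<xi> i x / ln (real n)}"
proof -
  define S where "S = {x \<in> space M. \<forall>i::nat. ln (real n) ^ 3 \<le> real i \<and> i \<le> n \<longrightarrow>
        Bv m n w \<xi> i x \<le> 2 / ln (real n) * Wv m n \<xi> i x / ln (real n)}"
  have [measurable]: "\<And>k. \<xi> k \<in> borel_measurable M"
    using distributed_measurable[OF ex] by simp
  define l where "l = ln (real n)"
  have l1: "1 \<le> l" using l by (simp add: l_def)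
  define K where "K = {k::nat. l ^ 3 / 2 \<le> 2 ^ k \<and> 2 ^ k \<le> n}"
  have finK: "finite K"
  proof (rule finite_subset)
    show "K \<subseteq> {..n}"
    proof
      fix k assume "k \<in> K"
      then have "2 ^ k \<le> n" by (simp add: K_def)
      moreover have "k < 2 ^ k" by (rule less_exp)
      ultimately show "k \<in> {..n}" by (simp del: less_exp)
    qed
  qed simp
  define E1 where "E1 = {x\<in>space M. real (m * n + 1) \<le> \<bar>Ups \<xi> (m * n + 1) x - real (m * n + 1)\<bar>}"
  define D where "D k = {x\<in>space M. real (m * 2 ^ k) / 2 \<le> \<bar>Ups \<xi> (m * 2 ^ k) x - real (m * 2 ^ k)\<bar>}" for k
  define E2 where "E2 = (\<Union>k\<in>K. D k)"
  define E3 where "E3 = {x\<in>space M. 1 / l ^ 2 \<le> small_eta_sum m n \<xi> (lam0 m n) x}"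
  have [measurable]: "E1 \<in> sets M" "E3 \<in> sets M" "S \<in> sets M"
    unfolding E1_def E3_def S_def by measurable
  have [measurable]: "D k \<in> sets M" for k
    unfolding D_def by measurable
  have [measurable]: "E2 \<in> sets M" using finK by (auto simp: E2_def)
  have P1: "prob E1 \<le> 1 / (real n + 1)"
    unfolding E1_def by (rule total_sum_deviation_prob[OF ind ex m])
  have "prob E2 \<le> 8 / (l ^ 3 / 2)"
    unfolding E2_def D_def using l1 by (intro dyadic_deviation_prob[OF ind ex m _ finK]) (auto simp: K_def)
  then have P2: "prob E2 \<le> 16 / l ^ 3" by simp
  have P3: "prob E3 \<le> (1 + l) / l ^ 2"
    unfolding E3_def l_def by (rule small_eta_sum_failure_prob[OF ind ex m l])
  have "AE x in M. x \<in> space M - S \<longrightarrow> x \<in> E1 \<union> E2 \<union> E3"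
  proof (rule AE_mp[OF exponential_nonneg_AE[OF ex] AE_I2], intro impI)
    fix x assume nn: "\<forall>k. 0 \<le> \<xi> k x" and x: "x \<in> space M - S"
    show "x \<in> E1 \<union> E2 \<union> E3"
    proof (rule ccontr)
      assume good: "x \<notin> E1 \<union> E2 \<union> E3"
      have "x \<in> S"
        unfolding S_def
      proof (intro CollectI conjI allI impI)
        fix i :: nat assume i: "ln (real n) ^ 3 \<le> real i \<and> i \<le> n"
        show "Bv m n w \<xi> i x \<le> 2 / ln (real n) * Wv m n \<xi> i x / ln (real n)"
        proof (rule good_outcome_bound[OF _ m l])
          show "Ups \<xi> (m * n + 1) x < 2 * real (m * n + 1)"
            using x good by (auto simp: E1_def abs_less_iff not_le)
          show "real (m * 2 ^ k) / 2 < Ups \<xi> (m * 2 ^ k) x"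
            if "ln (real n) ^ 3 / 2 \<le> 2 ^ k" "2 ^ k \<le> n" for k
          proof -
            have "k \<in> K" using that by (simp add: K_def l_def)
            then have "x \<notin> D k" using good by (auto simp: E2_def)
            then show ?thesis using x by (simp add: D_def abs_if split: if_splits)
          qed
          show "small_eta_sum m n \<xi> (lam0 m n) x < 1 / ln (real n) ^ 2"
            using x good by (auto simp: E3_def l_def not_le)
        qed (use i nn in auto)
      qed (use x in auto)
      with x show False by simp
    qed
  qed
  then have "prob (space M - S) \<le> prob (E1 \<union> E2 \<union> E3)"
    by (rule finite_measure_mono_AE) simp
  also have "\<dots> \<le> prob (E1 \<union> E2) + prob E3"
    by (rule measure_Un_le) simp_all
  also have "prob (E1 \<union> E2) \<le> prob E1 + prob E2"
    by (rule measure_Un_le) simp_all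
  finally show ?thesis
    using P1 P2 P3 prob_compl[of S] by (simp add: S_def l_def)
qed

end

theorem lemma3:
  fixes M :: "'a measure" and \<xi> :: "nat \<Rightarrow> 'a \<Rightarrow> real"
    and m :: nat and \<omega> :: "nat \<Rightarrow> real"
  assumes "prob_space M"
    and "prob_space.indep_vars M (\<lambda>_. borel) \<xi> UNIV"
    and "\<And>k. distributed M lborel (\<xi> k) (exponential_density 1)"
    and "m \<ge> 1"
    and "filterlim \<omega> at_top sequentially"
    and "\<And>n. \<omega> n \<le> ln (real n)"
  shows "\<exists>\<epsilon> :: nat \<Rightarrow> real. \<epsilon> \<longlonglongrightarrow> 0 \<and>
    (\<lambda>n. measure M {x \<in> space M. \<forall>i::nat. ln (real n) ^ 3 \<le> real i \<and> i \<le> n \<longrightarrow>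
        Bv m n (\<omega> n) \<xi> i x \<le> \<epsilon> n * Wv m n \<xi> i x / ln (real n)}) \<longlonglongrightarrow> 1"
proof -
  interpret prob_space M by (rule assms(1))
  let ?P = "\<lambda>n. prob {x \<in> space M. \<forall>i::nat. ln (real n) ^ 3 \<le> real i \<and> i \<le> n \<longrightarrow>
        Bv m n (\<omega> n) \<xi> i x \<le> 2 / ln (real n) * Wv m n \<xi> i x / ln (real n)}"
  have "?P \<longlonglongrightarrow> 1"
  proof (rule tendsto_sandwich)
    have "eventually (\<lambda>n. 1 \<le> ln (real n)) sequentially" by real_asymp
    then show "eventually (\<lambda>n. 1 - (1 / (real n + 1) + 16 / ln (real n) ^ 3
        + (1 + ln (real n)) / ln (real n) ^ 2) \<le> ?P n) sequentially"
      by eventually_elim (rule bound_prob_for_fixed_n[OF assms(2-4)])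
    show "(\<lambda>n. 1 - (1 / (real n + 1) + 16 / ln (real n) ^ 3
        + (1 + ln (real n)) / ln (real n) ^ 2)) \<longlonglongrightarrow> 1"
      by real_asymp
  qed auto
  moreover have "(\<lambda>n. 2 / ln (real n)) \<longlonglongrightarrow> 0" by real_asymp
  ultimately show ?thesis by blast
qed

end
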